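(* Consider the two-route traffic model with affine routing ratios described in the context, and let $\overline{x}$ be its unique equilibrium. Define, for $i=1,2$, the effective capacities $\tilde F_i=\frac{q_i+\sqrt{q_i^2+k_i}}{2\alpha}$, where $q_1=\alpha\big(F_1(1+\tfrac{E_2}{E_1})-E_2\big)-2(1-\alpha)r_1^0E_2$, $q_2=\alpha\big(F_2(1+\tfrac{E_1}{E_2})-E_1\big)-2(1-\alpha)r_2^0E_1$, $k_1=8\alpha F_1E_2$, $k_2=8\alpha F_2E_1$. Then: (i) if $\phi\le\min\{\tilde F_1,\tilde F_2\}$, the network has no unsatisfied demand at $\overline{x}$, i.e., $\phi R_\ell(\overline{x})\le S_\ell(\overline{x}_\ell)$ for $\ell=1,2$; (ii) if $\phi>\min\{\tilde F_1,\tilde F_2\}=\tilde F_i$, then there is unsatisfied demand on route $i$ at $\overline{x}$, i.e., $\phi R_i(\overline{x})>S_i(\overline{x}_i)$.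
   Context: Two routes $i=1,2$ connect an origin to a destination, with positive parameters $B_i$ (jam density), $C_i$ (critical density), $F_i$ (capacity), $C_i<B_i$, and constant demand $\phi>0$. Set $v_i=F_i/C_i$ and $E_i=v_iB_i$. The state $x=(x_1,x_2)\in\Omega:=[0,B_1]\times[0,B_2]$ evolves by $\dot x_i=\min\{\phi R_i(x),S_i(x_i)\}-D_i(x_i)$, with $S_i(x_i)=F_i$ if $x_i<C_i$, $S_i(x_i)=\frac{F_i}{B_i-C_i}(B_i-x_i)$ otherwise; $D_i(x_i)=v_ix_i$ if $x_i<C_i$, $D_i(x_i)=F_i$ otherwise. The routing ratios are affine: with $\alpha\in(0,1]$ and constants $r_1^0,r_2^0\ge0$, $r_1^0+r_2^0=1$, $R_1(x)=(1-\alpha)r_1^0+\alpha\big(\tfrac12+\tfrac12(\tfrac{x_2}{B_2}-\tfrac{x_1}{B_1})\big)$, $R_2(x)=(1-\alpha)r_2^0+\alpha\big(\tfrac12+\tfrac12(\tfrac{x_1}{B_1}-\tfrac{x_2}{B_2})\big)$. Standing assumptions: $\phi<F_1+F_2$; $F_i>(1-\alpha)\phi r_i^0$ for $i=1,2$; $\phi<E_i$ for $i=1,2$. Under these assumptions the system has a unique equilibrium $\overline{x}\in\Omega$. Demand on route $i$ at state $x$ is called unsatisfied if $\phi R_i(x)>S_i(x_i)$. *)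

theory Defs
  imports Complex_Main
begin

text \<open>Supply (receiving) function of a route with jam density B, critical density C, capacity F.\<close>
definition supply_fn :: "real \<Rightarrow> real \<Rightarrow> real \<Rightarrow> real \<Rightarrow> real" where
  "supply_fn B C F x = (if x < C then F else F / (B - C) * (B - x))"

definition demand_fn :: "real \<Rightarrow> real \<Rightarrow> real \<Rightarrow> real \<Rightarrow> real" where
  "demand_fn B C F x = (if x < C then (F / C) * x else F)"

definition R1 :: "real \<Rightarrow> real \<Rightarrow> real \<Rightarrow> real \<Rightarrow> real \<Rightarrow> real \<Rightarrow> real" where
  "R1 \<alpha> r10 B1 B2 x1 x2 = (1 - \<alpha>) * r10 + \<alpha> * (1/2 + 1/2 * (x2 / B2 - x1 / B1))"

definition R2 :: "real \<Rightarrow> real \<Rightarrow> real \<Rightarrow> real \<Rightarrow> real \<Rightarrow> real \<Rightarrow> real" where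
  "R2 \<alpha> r20 B1 B2 x1 x2 = (1 - \<alpha>) * r20 + \<alpha> * (1/2 + 1/2 * (x1 / B1 - x2 / B2))"

definition eff_cap :: "real \<Rightarrow> real \<Rightarrow> real \<Rightarrow> real" where
  "eff_cap \<alpha> q k = (q + sqrt (q\<^sup>2 + k)) / (2 * \<alpha>)"

end

theory Submission
  imports Defs
begin

text \<open>At an equilibrium every route offers its full capacity as supply, and its outflow
  \<open>v\<^sub>i x\<^sub>i\<close> equals \<open>min (\<phi> R\<^sub>i) F\<^sub>i\<close>. Since \<open>x\<^sub>i / B\<^sub>i\<close> is this outflow divided by \<open>E\<^sub>i\<close>, the quadratic
  \<open>\<alpha> \<phi>\<^sup>2 - q\<^sub>1 \<phi> - 2 F\<^sub>1 E\<^sub>2\<close>, whose larger root is the effective capacity of route 1, is a positive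
  combination of excesses of demand over capacity. As \<open>\<phi> < F\<^sub>1 + F\<^sub>2\<close> forbids both routes to be
  congested, this combination has the sign of the excess \<open>\<phi> R\<^sub>1 - F\<^sub>1\<close>. Hence demand on a route is
  satisfied exactly when \<open>\<phi>\<close> does not exceed its effective capacity, and route 2 is route 1 with
  the indices exchanged.\<close>

lemma equilibrium_at_capacity:
  fixes B C F x p :: real
  assumes "0 < C" "C < B" "0 < F"
    and eq: "min p (supply_fn B C F x) - demand_fn B C F x = 0"
  shows "supply_fn B C F x = F" and "F / C * x = min p F"
proof -
  have "supply_fn B C F x = F \<and> F / C * x = min p F"
  proof (cases "x < C")
    case True
    then show ?thesis using eq by (simp add: supply_fn_def demand_fn_def)
  next
    case False
    have "F / (B - C) * (B - x) \<le> F / (B - C) * (B - C)"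
      using False assms(1-3) by (intro mult_left_mono) auto
    then have "F / (B - C) * (B - x) \<le> F" using assms(2) by simp
    moreover have "min p (F / (B - C) * (B - x)) = F"
      using eq False by (simp add: supply_fn_def demand_fn_def)
    ultimately have "F / (B - C) * (B - x) = F" and "F \<le> p"
      by (auto simp: min_def split: if_splits)
    then have "x = C" using assms(2,3) by (simp add: field_simps)
    then show ?thesis using \<open>F \<le> p\<close> assms(1,2) by (simp add: supply_fn_def)
  qed
  then show "supply_fn B C F x = F" and "F / C * x = min p F" by auto
qed

lemma le_eff_cap_iff:
  fixes \<alpha> q k \<phi> :: real
  assumes "0 < \<alpha>" "0 \<le> k" "0 \<le> \<phi>"
  shows "\<phi> \<le> eff_cap \<alpha> q k \<longleftrightarrow> 4 * \<alpha> * (\<alpha> * \<phi>\<^sup>2 - q * \<phi>) \<le> k"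
proof -
  have square: "(2 * \<alpha> * \<phi> - q)\<^sup>2 = 4 * \<alpha> * (\<alpha> * \<phi>\<^sup>2 - q * \<phi>) + q\<^sup>2"
    by (simp add: algebra_simps power2_eq_square)
  have "\<phi> \<le> eff_cap \<alpha> q k \<longleftrightarrow> 2 * \<alpha> * \<phi> - q \<le> sqrt (q\<^sup>2 + k)"
    using assms(1) by (simp add: eff_cap_def pos_le_divide_eq algebra_simps)
  also have "\<dots> \<longleftrightarrow> 4 * \<alpha> * (\<alpha> * \<phi>\<^sup>2 - q * \<phi>) \<le> k"
  proof (cases "2 * \<alpha> * \<phi> \<le> q")
    case True
    have "\<alpha> * \<phi> - q \<le> 0" using True assms mult_nonneg_nonneg[of \<alpha> \<phi>] by linarith
    then have "4 * (\<alpha> * \<phi>) * (\<alpha> * \<phi> - q) \<le> 0"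
      using assms by (simp add: mult_nonneg_nonpos)
    then have "4 * \<alpha> * (\<alpha> * \<phi>\<^sup>2 - q * \<phi>) \<le> k"
      using assms(2) by (simp add: algebra_simps power2_eq_square)
    moreover have "0 \<le> sqrt (q\<^sup>2 + k)" using assms(2) by simp
    ultimately show ?thesis using True by linarith
  next
    case False
    then have "2 * \<alpha> * \<phi> - q \<le> sqrt (q\<^sup>2 + k) \<longleftrightarrow> (2 * \<alpha> * \<phi> - q)\<^sup>2 \<le> q\<^sup>2 + k"
      using sqrt_ge_absD[of "2 * \<alpha> * \<phi> - q"] real_le_rsqrt by auto
    then show ?thesis unfolding square by linarith
  qed
  finally show ?thesis .
qed

lemma R2_eq_R1_swap: "R2 \<alpha> r B1 B2 x1 x2 = R1 \<alpha> r B2 B1 x2 x1"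
  by (simp add: R1_def R2_def)

lemma R1_add_R2:
  assumes "r10 + r20 = 1"
  shows "R1 \<alpha> r10 B1 B2 x1 x2 + R2 \<alpha> r20 B1 B2 x1 x2 = 1"
proof -
  have "(1 - \<alpha>) * r10 + (1 - \<alpha>) * r20 = 1 - \<alpha>"
    using assms by (metis distrib_left mult.right_neutral)
  then show ?thesis by (simp add: R1_def R2_def algebra_simps)
qed

lemma quadratic_eq_R1_excess:
  fixes E1 :: real
  assumes "E1 \<noteq> 0"
  shows "\<alpha> * \<phi>\<^sup>2 - (\<alpha> * (F1 * (1 + E2 / E1) - E2) - 2 * (1 - \<alpha>) * r10 * E2) * \<phi> - 2 * F1 * E2
    = 2 * E2 * (\<phi> * R1 \<alpha> r10 B1 B2 x1 x2 - F1) + \<alpha> * \<phi> * (\<phi> - F1 - E2 * (x2 / B2))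
      + \<alpha> * \<phi> * (E2 / E1) * (E1 * (x1 / B1) - F1)"
  using assms by (simp add: R1_def field_simps power2_eq_square)

lemma excess_combination_nonpos_iff:
  fixes a b \<phi> F1 F2 c1 c2 c3 :: real
  assumes "0 < c1" "0 \<le> c2" "0 \<le> c3" "a + b = \<phi>" "\<phi> < F1 + F2"
  shows "c1 * (a - F1) + c2 * (\<phi> - F1 - min b F2) + c3 * (min a F1 - F1) \<le> 0 \<longleftrightarrow> a \<le> F1"
proof (cases "a \<le> F1")
  case True
  have "c1 * (a - F1) \<le> 0" "c3 * (min a F1 - F1) \<le> 0"
    using True assms by (simp_all add: mult_nonneg_nonpos)
  moreover have "c2 * (\<phi> - F1 - min b F2) \<le> 0"
    using True assms by (intro mult_nonneg_nonpos) (auto simp: min_def)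
  ultimately show ?thesis using True by linarith
next
  case False
  then have "min b F2 = b" "min a F1 = F1" using assms(4,5) by auto
  then have "c1 * (a - F1) + c2 * (\<phi> - F1 - min b F2) + c3 * (min a F1 - F1) = (c1 + c2) * (a - F1)"
    by (simp add: algebra_simps flip: assms(4))
  moreover have "0 < (c1 + c2) * (a - F1)" using False assms(1,2) by simp
  ultimately show ?thesis using False by linarith
qed

lemma demand_satisfied_iff_le_eff_cap:
  fixes B1 B2 C1 C2 F1 F2 E1 E2 \<phi> \<alpha> r10 r20 x1 x2 :: real
  assumes pos: "0 < B1" "0 < B2" "0 < C1" "0 < C2" "0 < F1" "0 < F2" "0 < \<phi>" "0 < \<alpha>"
    and CB: "C1 < B1" "C2 < B2"
    and r0: "r10 + r20 = 1"
    and cap: "\<phi> < F1 + F2"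
    and E: "E1 = F1 / C1 * B1" "E2 = F2 / C2 * B2"
    and eq1: "min (\<phi> * R1 \<alpha> r10 B1 B2 x1 x2) (supply_fn B1 C1 F1 x1) - demand_fn B1 C1 F1 x1 = 0"
    and eq2: "min (\<phi> * R2 \<alpha> r20 B1 B2 x1 x2) (supply_fn B2 C2 F2 x2) - demand_fn B2 C2 F2 x2 = 0"
  shows "\<phi> * R1 \<alpha> r10 B1 B2 x1 x2 \<le> supply_fn B1 C1 F1 x1 \<longleftrightarrow>
    \<phi> \<le> eff_cap \<alpha> (\<alpha> * (F1 * (1 + E2 / E1) - E2) - 2 * (1 - \<alpha>) * r10 * E2) (8 * \<alpha> * F1 * E2)"
proof -
  define a where "a = \<phi> * R1 \<alpha> r10 B1 B2 x1 x2"
  define b where "b = \<phi> * R2 \<alpha> r20 B1 B2 x1 x2"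
  define q where "q = \<alpha> * (F1 * (1 + E2 / E1) - E2) - 2 * (1 - \<alpha>) * r10 * E2"
  have "0 < E1" "0 < E2" using pos E by simp_all
  have "a + b = \<phi>" using R1_add_R2[OF r0] by (simp add: a_def b_def flip: distrib_left)
  have outflow1: "E1 * (x1 / B1) = min a F1"
    using equilibrium_at_capacity(2)[OF pos(3) CB(1) pos(5) eq1] pos(1) E(1) by (simp add: a_def)
  have outflow2: "E2 * (x2 / B2) = min b F2"
    using equilibrium_at_capacity(2)[OF pos(4) CB(2) pos(6) eq2] pos(2) E(2) by (simp add: b_def)
  have quadratic: "\<alpha> * \<phi>\<^sup>2 - q * \<phi> - 2 * F1 * E2 = 2 * E2 * (a - F1)
      + \<alpha> * \<phi> * (\<phi> - F1 - min b F2) + \<alpha> * \<phi> * (E2 / E1) * (min a F1 - F1)"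
    using quadratic_eq_R1_excess[of E1 \<alpha> \<phi> F1 E2 r10 B1 B2 x1 x2, folded a_def q_def,
        unfolded outflow1 outflow2] \<open>0 < E1\<close> by simp
  have "\<phi> \<le> eff_cap \<alpha> q (8 * \<alpha> * F1 * E2) \<longleftrightarrow> \<alpha> * \<phi>\<^sup>2 - q * \<phi> - 2 * F1 * E2 \<le> 0"
    using le_eff_cap_iff[of \<alpha> "8 * \<alpha> * F1 * E2" \<phi> q] pos \<open>0 < E2\<close> by auto
  also have "\<dots> \<longleftrightarrow> 2 * E2 * (a - F1) + \<alpha> * \<phi> * (\<phi> - F1 - min b F2)
      + \<alpha> * \<phi> * (E2 / E1) * (min a F1 - F1) \<le> 0"
    by (simp only: quadratic)
  also have "\<dots> \<longleftrightarrow> a \<le> F1"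
    using \<open>0 < E1\<close> \<open>0 < E2\<close> pos \<open>a + b = \<phi>\<close> cap by (intro excess_combination_nonpos_iff) simp_all
  finally show ?thesis
    using equilibrium_at_capacity(1)[OF pos(3) CB(1) pos(5) eq1] by (simp add: a_def q_def)
qed

theorem proposition2:
  fixes B1 B2 C1 C2 F1 F2 \<phi> \<alpha> r10 r20 x1 x2 :: real
  assumes pos: "B1 > 0" "B2 > 0" "C1 > 0" "C2 > 0" "F1 > 0" "F2 > 0" "\<phi> > 0"
    and CB: "C1 < B1" "C2 < B2"
    and alpha: "0 < \<alpha>" "\<alpha> \<le> 1"
    and r0: "r10 \<ge> 0" "r20 \<ge> 0" "r10 + r20 = 1"
    and A1: "\<phi> < F1 + F2"
    and A2: "F1 > (1 - \<alpha>) * \<phi> * r10" "F2 > (1 - \<alpha>) * \<phi> * r20"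
    and A3: "\<phi> < (F1 / C1) * B1" "\<phi> < (F2 / C2) * B2"
    and dom: "0 \<le> x1" "x1 \<le> B1" "0 \<le> x2" "x2 \<le> B2"
    and eq1: "min (\<phi> * R1 \<alpha> r10 B1 B2 x1 x2) (supply_fn B1 C1 F1 x1) - demand_fn B1 C1 F1 x1 = 0"
    and eq2: "min (\<phi> * R2 \<alpha> r20 B1 B2 x1 x2) (supply_fn B2 C2 F2 x2) - demand_fn B2 C2 F2 x2 = 0"
  shows
    "let E1 = (F1 / C1) * B1; E2 = (F2 / C2) * B2;
         q1 = \<alpha> * (F1 * (1 + E2 / E1) - E2) - 2 * (1 - \<alpha>) * r10 * E2;
         q2 = \<alpha> * (F2 * (1 + E1 / E2) - E1) - 2 * (1 - \<alpha>) * r20 * E1;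
         k1 = 8 * \<alpha> * F1 * E2;
         k2 = 8 * \<alpha> * F2 * E1;
         Ft1 = eff_cap \<alpha> q1 k1;
         Ft2 = eff_cap \<alpha> q2 k2
     in (\<phi> \<le> min Ft1 Ft2 \<longrightarrow>
           \<phi> * R1 \<alpha> r10 B1 B2 x1 x2 \<le> supply_fn B1 C1 F1 x1 \<and>
           \<phi> * R2 \<alpha> r20 B1 B2 x1 x2 \<le> supply_fn B2 C2 F2 x2)
      \<and> (\<phi> > min Ft1 Ft2 \<and> min Ft1 Ft2 = Ft1 \<longrightarrow>
           \<phi> * R1 \<alpha> r10 B1 B2 x1 x2 > supply_fn B1 C1 F1 x1)
      \<and> (\<phi> > min Ft1 Ft2 \<and> min Ft1 Ft2 = Ft2 \<longrightarrow>
           \<phi> * R2 \<alpha> r20 B1 B2 x1 x2 > supply_fn B2 C2 F2 x2)"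
proof -
  \<comment> \<open>\<open>A2\<close>, \<open>A3\<close> and \<open>dom\<close> only serve the existence and uniqueness of the equilibrium.\<close>
  define Ft1 where "Ft1 = eff_cap \<alpha> (\<alpha> * (F1 * (1 + F2 / C2 * B2 / (F1 / C1 * B1)) - F2 / C2 * B2)
      - 2 * (1 - \<alpha>) * r10 * (F2 / C2 * B2)) (8 * \<alpha> * F1 * (F2 / C2 * B2))"
  define Ft2 where "Ft2 = eff_cap \<alpha> (\<alpha> * (F2 * (1 + F1 / C1 * B1 / (F2 / C2 * B2)) - F1 / C1 * B1)
      - 2 * (1 - \<alpha>) * r20 * (F1 / C1 * B1)) (8 * \<alpha> * F2 * (F1 / C1 * B1))"
  have route1: "\<phi> * R1 \<alpha> r10 B1 B2 x1 x2 \<le> supply_fn B1 C1 F1 x1 \<longleftrightarrow> \<phi> \<le> Ft1"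
    unfolding Ft1_def using pos CB alpha r0 A1 eq1 eq2
    by (intro demand_satisfied_iff_le_eff_cap) simp_all
  have route2: "\<phi> * R2 \<alpha> r20 B1 B2 x1 x2 \<le> supply_fn B2 C2 F2 x2 \<longleftrightarrow> \<phi> \<le> Ft2"
    unfolding Ft2_def R2_eq_R1_swap using pos CB alpha r0 A1 eq1 eq2
    by (intro demand_satisfied_iff_le_eff_cap) (simp_all add: R2_eq_R1_swap)
  show ?thesis
    unfolding Let_def Ft1_def [symmetric] Ft2_def [symmetric] using route1 route2 by auto
qed

end
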